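(* Let ${\cal X}$, ${\cal V}$, ${\cal Y}$ be finite alphabets, $P_X$ a distribution on ${\cal X}$, $P_{V|X}$ a channel from ${\cal X}$ to ${\cal V}$, and $d$ a nonnegative convex function on probability distributions on ${\cal X}\times{\cal Y}$ (i.e., ${\rm E}_J[d(P_{X_JY_J})]\ge d({\rm E}_J[P_{X_JY_J}])$ for every finite random variable $J$). Let $X^L$ be i.i.d. with distribution $P_X$, let $V^L$ be obtained from $X^L$ through the memoryless channel $P_{V|X}$, and let $Y^L$ be the output of a code of block length $L$ with $2^{LR}$ code words in ${\cal Y}^L$ whose (possibly random) encoder sees only $V^L$, so that $Y^L$ is conditionally independent of $X^L$ given $V^L$. If ${\rm E}[d(P^e_{X^LY^L})]=\Delta$, then $$R\ \ge\ \min_{P_{Y|V}:\ d(P_{XY})\le\Delta} I(V;Y),$$ where for a channel $P_{Y|V}$ the joint law is $P_{XVY}=P_XP_{V|X}P_{Y|V}$, $P_{XY}$ is its $(X,Y)$-marginal, and $I(V;Y)$ is computed from its $(V,Y)$-marginal.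
   Context: For strings $x^L\in{\cal X}^L$, $y^L\in{\cal Y}^L$, the empirical distribution is $P^e_{x^Ly^L}(a,b)=\frac1L|\{\ell:(x_\ell,y_\ell)=(a,b)\}|$ for $a\in{\cal X}$, $b\in{\cal Y}$. Mutual information is $I(V;Y)=\sum_{(v,y)\in\mathrm{supp}P_{VY}}P_{VY}(v,y)\log_2\frac{P_{VY}(v,y)}{P_V(v)P_Y(y)}$. *)

theory Defs
  imports Complex_Main
begin

definition is_dist :: "('a::finite \<Rightarrow> real) \<Rightarrow> bool" where
  "is_dist P \<longleftrightarrow> (\<forall>a. P a \<ge> 0) \<and> (\<Sum>a\<in>UNIV. P a) = 1"

definition is_channel :: "('a \<Rightarrow> 'b::finite \<Rightarrow> real) \<Rightarrow> bool" where
  "is_channel W \<longleftrightarrow> (\<forall>a. is_dist (W a))"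

definition emp_dist :: "'a list \<Rightarrow> 'b list \<Rightarrow> ('a \<times> 'b \<Rightarrow> real)" where
  "emp_dist xs ys = (\<lambda>(a,b). real (card {l. l < length xs \<and> xs ! l = a \<and> ys ! l = b}) / real (length xs))"

definition mutual_info :: "('v::finite \<times> 'y::finite \<Rightarrow> real) \<Rightarrow> real" where
  "mutual_info P = (\<Sum>(v,y)\<in>{p. P p \<noteq> 0}.
      P (v,y) * log 2 (P (v,y) / ((\<Sum>y'\<in>UNIV. P (v,y')) * (\<Sum>v'\<in>UNIV. P (v',y)))))"

definition marg_XY :: "('x::finite \<Rightarrow> real) \<Rightarrow> ('x \<Rightarrow> 'v::finite \<Rightarrow> real) \<Rightarrow> ('v \<Rightarrow> 'y \<Rightarrow> real) \<Rightarrow> ('x \<times> 'y \<Rightarrow> real)" where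
  "marg_XY PX W Q = (\<lambda>(x,y). \<Sum>v\<in>UNIV. PX x * W x v * Q v y)"

definition marg_VY :: "('x::finite \<Rightarrow> real) \<Rightarrow> ('x \<Rightarrow> 'v::finite \<Rightarrow> real) \<Rightarrow> ('v \<Rightarrow> 'y \<Rightarrow> real) \<Rightarrow> ('v \<times> 'y \<Rightarrow> real)" where
  "marg_VY PX W Q = (\<lambda>(v,y). \<Sum>x\<in>UNIV. PX x * W x v * Q v y)"

text \<open>Probability of (x^L, v^L, y^L) under i.i.d. source, memoryless channel, random encoder E.\<close>
definition block_prob :: "('x \<Rightarrow> real) \<Rightarrow> ('x \<Rightarrow> 'v \<Rightarrow> real) \<Rightarrow> ('v list \<Rightarrow> 'y list \<Rightarrow> real)
    \<Rightarrow> 'x list \<Rightarrow> 'v list \<Rightarrow> 'y list \<Rightarrow> real" where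
  "block_prob PX W E xs vs ys = (\<Prod>l<length xs. PX (xs ! l) * W (xs ! l) (vs ! l)) * E vs ys"

end

theory Submission
  imports Defs
begin

(* Let Q be the average over the positions l of the conditional laws of Y_l given V_l, so that
   the joint law q of (V, Y) under Q is the average of the laws of (V_l, Y_l). Since each X_l V_l
   is distributed as P_X P_{V|X} and X^L - V^L - Y^L is a Markov chain, the expected empirical type
   of (X^L, Y^L) is the (X, Y)-marginal of P_X P_{V|X} Q, and convexity of d bounds its distortion
   by Delta. For the rate, averaging gives
     L I(V;Y) = E sum_l log (q(V_l, Y_l) / (q(V_l) q(Y_l))) = E log (B(V^L|Y^L) / P(V^L))
   with B the memoryless backward channel of q. As P(V^L, Y^L) <= P(V^L), this is at most
   E log (B(V^L|Y^L) / P(V^L, Y^L)), and since B(.|y^L) has mass at most 1 for each of the |C|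
   code words, Gibbs' inequality bounds it by log |C| = L R. *)

section \<open>Sums of product weights over words\<close>

lemma sum_lists_length_prod:
  fixes f :: "nat \<Rightarrow> 'a::finite \<Rightarrow> 'b::comm_semiring_1"
  shows "(\<Sum>xs | length xs = n. \<Prod>k<n. f k (xs ! k)) = (\<Prod>k<n. \<Sum>a\<in>UNIV. f k a)"
proof (induction n arbitrary: f)
  case 0
  then show ?case by simp
next
  case (Suc n)
  let ?cons = "\<lambda>(a, xs). a # xs"
  have lists_Suc: "{xs::'a list. length xs = Suc n} = ?cons ` (UNIV \<times> {xs. length xs = n})"
    by (auto simp: image_iff length_Suc_conv)
  have "inj_on ?cons (UNIV \<times> {xs::'a list. length xs = n})"
    by (auto simp: inj_on_def)
  then have "(\<Sum>xs | length xs = Suc n. \<Prod>k<Suc n. f k (xs ! k))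
      = (\<Sum>(a, xs)\<in>UNIV \<times> {xs::'a list. length xs = n}. f 0 a * (\<Prod>k<n. f (Suc k) (xs ! k)))"
    by (simp only: lists_Suc sum.reindex prod.lessThan_Suc_shift o_def case_prod_beta nth_Cons_0 nth_Cons_Suc)
      (simp add: split_def)
  also have "\<dots> = (\<Sum>a\<in>UNIV. f 0 a * (\<Sum>xs | length xs = n. \<Prod>k<n. f (Suc k) (xs ! k)))"
    by (simp add: sum.cartesian_product[symmetric] sum_distrib_left)
  also have "\<dots> = (\<Sum>a\<in>UNIV. f 0 a) * (\<Sum>xs | length xs = n. \<Prod>k<n. f (Suc k) (xs ! k))"
    by (simp add: sum_distrib_right)
  also have "\<dots> = (\<Prod>k<Suc n. \<Sum>a\<in>UNIV. f k a)"
    by (simp only: Suc.IH[of "\<lambda>k. f (Suc k)"] prod.lessThan_Suc_shift)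
  finally show ?case .
qed

lemma sum_lists_length_nth_prod:
  fixes f :: "nat \<Rightarrow> 'a::finite \<Rightarrow> 'b::comm_semiring_1"
  assumes "l < n"
  shows "(\<Sum>xs | length xs = n. if xs ! l = a then \<Prod>k\<in>{..<n}-{l}. f k (xs ! k) else 0)
       = (\<Prod>k\<in>{..<n}-{l}. \<Sum>b\<in>UNIV. f k b)"
proof -
  define g where "g = f(l := \<lambda>b. if b = a then 1 else 0)"
  have split_l: "(\<Prod>k<n. h k) = h l * (\<Prod>k\<in>{..<n}-{l}. h k)" for h :: "nat \<Rightarrow> 'b"
    using assms by (simp add: prod.remove)
  have "(\<Prod>k<n. g k (xs ! k)) = (if xs ! l = a then \<Prod>k\<in>{..<n}-{l}. f k (xs ! k) else 0)" for xs
    unfolding split_l[of "\<lambda>k. g k (xs ! k)"] by (simp add: g_def)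
  moreover have "(\<Prod>k<n. \<Sum>b\<in>UNIV. g k b) = (\<Prod>k\<in>{..<n}-{l}. \<Sum>b\<in>UNIV. f k b)"
    unfolding split_l[of "\<lambda>k. \<Sum>b\<in>UNIV. g k b"] by (simp add: g_def)
  ultimately show ?thesis
    using sum_lists_length_prod[of g n] by simp
qed

definition iid_prob :: "('a \<Rightarrow> real) \<Rightarrow> 'a list \<Rightarrow> real" where
  "iid_prob p xs = (\<Prod>k<length xs. p (xs ! k))"

definition iid_prob_except :: "('a \<Rightarrow> real) \<Rightarrow> nat \<Rightarrow> 'a list \<Rightarrow> real" where
  "iid_prob_except p l xs = (\<Prod>k\<in>{..<length xs}-{l}. p (xs ! k))"

lemma iid_prob_nth: "l < length xs \<Longrightarrow> iid_prob p xs = p (xs ! l) * iid_prob_except p l xs"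
  unfolding iid_prob_def iid_prob_except_def by (simp add: prod.remove)

lemma iid_prob_nonneg: "(\<And>a. p a \<ge> 0) \<Longrightarrow> iid_prob p xs \<ge> 0"
  unfolding iid_prob_def by (simp add: prod_nonneg)

lemma iid_prob_except_nonneg: "(\<And>a. p a \<ge> 0) \<Longrightarrow> iid_prob_except p l xs \<ge> 0"
  unfolding iid_prob_except_def by (simp add: prod_nonneg)

lemma sum_iid_prob:
  assumes "is_dist p"
  shows "(\<Sum>xs | length xs = n. iid_prob p xs) = 1"
proof -
  have "(\<Sum>xs | length xs = n. iid_prob p xs) = (\<Sum>xs | length xs = n. \<Prod>k<n. p (xs ! k))"
    by (intro sum.cong) (auto simp: iid_prob_def)
  also have "\<dots> = 1"
    using assms sum_lists_length_prod[where f = "\<lambda>_. p"] by (simp add: is_dist_def)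
  finally show ?thesis .
qed

lemma sum_iid_prob_except:
  assumes "is_dist p" and "l < n"
  shows "(\<Sum>xs | length xs = n. if xs ! l = a then iid_prob_except p l xs else 0) = 1"
proof -
  have "(\<Sum>xs | length xs = n. if xs ! l = a then iid_prob_except p l xs else 0)
      = (\<Sum>xs | length xs = n. if xs ! l = a then \<Prod>k\<in>{..<n}-{l}. p (xs ! k) else 0)"
    by (intro sum.cong) (auto simp: iid_prob_except_def)
  also have "\<dots> = 1"
    using assms sum_lists_length_nth_prod[where f = "\<lambda>_. p"] by (simp add: is_dist_def)
  finally show ?thesis .
qed

section \<open>Gibbs' inequality, convexity and empirical distributions\<close>

text \<open>Terms with \<open>a i = 0\<close> vanish, whatever the junk value of \<open>ln (b i / 0)\<close>.\<close>
lemma gibbs_inequality: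
  fixes a b :: "'i \<Rightarrow> real"
  assumes "finite S" and a_sum: "sum a S = 1"
    and a_nonneg: "\<And>i. i \<in> S \<Longrightarrow> a i \<ge> 0" and b_nonneg: "\<And>i. i \<in> S \<Longrightarrow> b i \<ge> 0"
    and b_pos: "\<And>i. i \<in> S \<Longrightarrow> a i > 0 \<Longrightarrow> b i > 0"
    and b_sum: "sum b S \<le> c"
  shows "(\<Sum>i\<in>S. a i * ln (b i / a i)) \<le> ln c"
proof -
  define B where "B = sum b S"
  have "\<exists>j\<in>S. a j > 0"
  proof (rule ccontr)
    assume "\<not> (\<exists>j\<in>S. a j > 0)"
    then have "sum a S \<le> 0"
      by (intro sum_nonpos) (auto simp: not_less)
    with a_sum show False by simp
  qed
  then obtain j where "j \<in> S" "a j > 0" ..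
  then have "B > 0"
    unfolding B_def using assms by (intro sum_pos2[of S j]) auto
  have term_le: "a i * ln (b i / a i) - a i * ln B \<le> b i / B - a i" if "i \<in> S" for i
  proof (cases "a i > 0")
    case True
    with that b_pos have "b i > 0" by blast
    have "a i * ln (b i / a i) - a i * ln B = a i * ln (b i / (a i * B))"
      using True \<open>b i > 0\<close> \<open>B > 0\<close> by (simp add: ln_div ln_mult algebra_simps)
    also have "\<dots> \<le> a i * (b i / (a i * B) - 1)"
      using True \<open>b i > 0\<close> \<open>B > 0\<close> by (intro mult_left_mono ln_le_minus_one) auto
    also have "\<dots> = b i / B - a i"
      using True by (simp add: field_simps)
    finally show ?thesis .
  next
    case False
    with that a_nonneg have "a i = 0"
      by force
    then show ?thesis
      using that b_nonneg \<open>B > 0\<close> by simp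
  qed
  have "(\<Sum>i\<in>S. a i * ln (b i / a i)) - ln B = (\<Sum>i\<in>S. a i * ln (b i / a i) - a i * ln B)"
    using a_sum by (simp add: sum_subtractf sum_distrib_right[symmetric])
  also have "\<dots> \<le> (\<Sum>i\<in>S. b i / B - a i)"
    using term_le by (rule sum_mono)
  also have "\<dots> = 0"
    using a_sum \<open>B > 0\<close> by (simp add: sum_subtractf sum_divide_distrib[symmetric] B_def)
  finally have "(\<Sum>i\<in>S. a i * ln (b i / a i)) \<le> ln B"
    by simp
  also have "\<dots> \<le> ln c"
    using \<open>B > 0\<close> b_sum by (simp add: B_def)
  finally show ?thesis .
qed

definition convex_on_dists :: "(('a::finite \<Rightarrow> real) \<Rightarrow> real) \<Rightarrow> bool" where
  "convex_on_dists d \<longleftrightarrow> (\<forall>(J::nat set) w Q. finite J \<longrightarrow> (\<forall>j\<in>J. w j \<ge> 0) \<longrightarrow> sum w J = 1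
      \<longrightarrow> (\<forall>j\<in>J. is_dist (Q j)) \<longrightarrow> d (\<lambda>p. \<Sum>j\<in>J. w j * Q j p) \<le> (\<Sum>j\<in>J. w j * d (Q j)))"

lemma convex_on_distsD:
  fixes J :: "nat set"
  assumes "convex_on_dists d" and "finite J" and "\<And>j. j \<in> J \<Longrightarrow> w j \<ge> 0" and "sum w J = 1"
    and "\<And>j. j \<in> J \<Longrightarrow> is_dist (Q j)"
  shows "d (\<lambda>p. \<Sum>j\<in>J. w j * Q j p) \<le> (\<Sum>j\<in>J. w j * d (Q j))"
  using assms unfolding convex_on_dists_def by simp

lemma convex_on_dists_sum:
  assumes "convex_on_dists d"
    and "finite T" and "\<And>t. t \<in> T \<Longrightarrow> w t \<ge> 0" and "sum w T = 1"
    and "\<And>t. t \<in> T \<Longrightarrow> is_dist (Q t)"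
  shows "d (\<lambda>p. \<Sum>t\<in>T. w t * Q t p) \<le> (\<Sum>t\<in>T. w t * d (Q t))"
proof -
  obtain g where g: "bij_betw g {0..<card T} T"
    using \<open>finite T\<close> ex_bij_betw_nat_finite by blast
  have reindex: "(\<Sum>t\<in>T. h t) = (\<Sum>j<card T. h (g j))" for h :: "_ \<Rightarrow> real"
    using sum.reindex_bij_betw[OF g, of h] by (simp add: atLeast0LessThan)
  have g_T: "g j \<in> T" if "j < card T" for j
    using g that by (auto simp: bij_betw_def)
  have "d (\<lambda>p. \<Sum>j<card T. w (g j) * Q (g j) p) \<le> (\<Sum>j<card T. w (g j) * d (Q (g j)))"
    using g_T assms(3-5) reindex[of w]
    by (intro convex_on_distsD[OF assms(1)]) auto
  then show ?thesis
    by (simp only: reindex)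
qed

lemma emp_dist_eq_average:
  "emp_dist xs ys (a, b) = (\<Sum>l<length xs. if xs ! l = a \<and> ys ! l = b then 1 else 0) / length xs"
proof -
  have "{l. l < length xs \<and> xs ! l = a \<and> ys ! l = b} = {l \<in> {..<length xs}. xs ! l = a \<and> ys ! l = b}"
    by auto
  then show ?thesis
    by (simp add: emp_dist_def sum.inter_filter[symmetric])
qed

lemma is_dist_emp_dist:
  fixes xs :: "'a::finite list" and ys :: "'b::finite list"
  assumes "xs \<noteq> []"
  shows "is_dist (emp_dist xs ys)"
proof -
  have "(\<Sum>p\<in>UNIV. emp_dist xs ys p)
      = (\<Sum>p\<in>UNIV. \<Sum>l<length xs. if (xs ! l, ys ! l) = p then 1 else 0) / length xs"
    unfolding sum_divide_distrib by (intro sum.cong refl) (auto simp: emp_dist_eq_average sum_divide_distrib)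
  also have "\<dots> = 1"
    using assms by (subst sum.swap) simp
  finally show ?thesis
    by (auto simp: is_dist_def emp_dist_def)
qed

lemma mutual_info_eq_sum_ln:
  "mutual_info P = (\<Sum>p\<in>UNIV. P p * ln (P p /
      ((\<Sum>y'\<in>UNIV. P (fst p, y')) * (\<Sum>v'\<in>UNIV. P (v', snd p))))) / ln 2"
proof -
  have "mutual_info P = (\<Sum>p\<in>{p. P p \<noteq> 0}. P p * ln (P p /
      ((\<Sum>y'\<in>UNIV. P (fst p, y')) * (\<Sum>v'\<in>UNIV. P (v', snd p)))) / ln 2)"
    unfolding mutual_info_def log_def by (intro sum.cong refl) (auto simp: split_def)
  also have "\<dots> = (\<Sum>p\<in>UNIV. P p * ln (P p /
      ((\<Sum>y'\<in>UNIV. P (fst p, y')) * (\<Sum>v'\<in>UNIV. P (v', snd p)))) / ln 2)"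
    by (intro sum.mono_neutral_left) auto
  finally show ?thesis
    by (simp add: sum_divide_distrib)
qed

section \<open>The single-letter test channel of a code\<close>

locale remote_source_code =
  fixes PX :: "'x::finite \<Rightarrow> real" and W :: "'x \<Rightarrow> 'v::finite \<Rightarrow> real"
    and L :: nat and C :: "'y::finite list set" and E :: "'v list \<Rightarrow> 'y list \<Rightarrow> real"
  assumes PX: "is_dist PX" and W: "is_channel W" and L_pos: "L > 0"
    and C: "C \<subseteq> {ys. length ys = L}"
    and E_nonneg: "\<And>vs ys. E vs ys \<ge> 0"
    and E_sum: "\<And>vs. length vs = L \<Longrightarrow> (\<Sum>ys\<in>C. E vs ys) = 1"
begin

definition pV :: "'v \<Rightarrow> real" where
  "pV v = (\<Sum>x\<in>UNIV. PX x * W x v)"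

definition joint :: "'v list \<Rightarrow> 'y list \<Rightarrow> real" where
  "joint vs ys = iid_prob pV vs * E vs ys"

text \<open>The law of the \<open>l\<close>-th output letter given the \<open>l\<close>-th input letter \<open>v\<close>, written without
  dividing by \<open>pV v\<close> so that it is a channel also where \<open>pV v = 0\<close>.\<close>
definition letter_channel :: "nat \<Rightarrow> 'v \<Rightarrow> 'y \<Rightarrow> real" where
  "letter_channel l v y = (\<Sum>vs | length vs = L. \<Sum>ys\<in>C.
      if vs ! l = v \<and> ys ! l = y then iid_prob_except pV l vs * E vs ys else 0)"

definition test_channel :: "'v \<Rightarrow> 'y \<Rightarrow> real" where
  "test_channel v y = (\<Sum>l<L. letter_channel l v y) / L"

lemma finite_C: "finite C"
  using C finite_list_length by (rule finite_subset)

lemma is_dist_pV: "is_dist pV"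
proof -
  have "(\<Sum>v\<in>UNIV. pV v) = 1"
    using PX W unfolding pV_def is_dist_def is_channel_def
    by (subst sum.swap) (simp add: sum_distrib_left[symmetric])
  moreover have "pV v \<ge> 0" for v
    using PX W unfolding pV_def is_dist_def is_channel_def by (simp add: sum_nonneg)
  ultimately show ?thesis
    by (simp add: is_dist_def)
qed

lemma pV_nonneg: "pV v \<ge> 0"
  using is_dist_pV by (simp add: is_dist_def)

lemma E_le_1:
  assumes "length vs = L" and "ys \<in> C"
  shows "E vs ys \<le> 1"
  using member_le_sum[of ys C "E vs"] assms E_nonneg E_sum finite_C by simp

lemma joint_nonneg: "joint vs ys \<ge> 0"
  by (simp add: joint_def iid_prob_nonneg pV_nonneg E_nonneg)

lemma letter_channel_nonneg: "letter_channel l v y \<ge> 0"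
  unfolding letter_channel_def
  by (intro sum_nonneg) (simp add: iid_prob_except_nonneg pV_nonneg E_nonneg)

lemma is_channel_letter_channel:
  assumes "l < L"
  shows "is_channel (letter_channel l)"
proof -
  have "(\<Sum>y\<in>UNIV. letter_channel l v y) = 1" for v
  proof -
    have "(\<Sum>y\<in>UNIV. letter_channel l v y)
      = (\<Sum>vs | length vs = L. if vs ! l = v then iid_prob_except pV l vs * (\<Sum>ys\<in>C. E vs ys) else 0)"
      unfolding letter_channel_def
      by (subst sum.swap, intro sum.cong refl, subst sum.swap) (simp add: sum_distrib_left)
    also have "\<dots> = (\<Sum>vs | length vs = L. if vs ! l = v then iid_prob_except pV l vs else 0)"
      by (intro sum.cong) (auto simp: E_sum)
    also have "\<dots> = 1"
      using is_dist_pV assms by (rule sum_iid_prob_except)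
    finally show ?thesis .
  qed
  then show ?thesis
    by (simp add: is_channel_def is_dist_def letter_channel_nonneg)
qed

lemma is_channel_test_channel: "is_channel test_channel"
proof -
  have "(\<Sum>y\<in>UNIV. test_channel v y) = (\<Sum>l<L. \<Sum>y\<in>UNIV. letter_channel l v y) / L" for v
    unfolding test_channel_def sum_divide_distrib[symmetric] by (subst sum.swap) (rule refl)
  moreover have "test_channel v y \<ge> 0" for v y
    unfolding test_channel_def by (simp add: sum_nonneg letter_channel_nonneg)
  ultimately show ?thesis
    using is_channel_letter_channel L_pos by (simp add: is_channel_def is_dist_def)
qed

lemma sum_joint_nth:
  assumes "l < L"
  shows "(\<Sum>vs | length vs = L. \<Sum>ys\<in>C. if vs ! l = v \<and> ys ! l = y then joint vs ys else 0)
       = pV v * letter_channel l v y"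
  unfolding letter_channel_def sum_distrib_left
  using assms by (intro sum.cong refl) (auto simp: joint_def iid_prob_nth)

lemma marg_VY_test_channel: "marg_VY PX W test_channel (v, y) = pV v * test_channel v y"
  by (simp add: marg_VY_def pV_def sum_distrib_right)

lemma marg_VY_test_channel_eq_average:
  "marg_VY PX W test_channel (v, y) = (\<Sum>l<L. \<Sum>vs | length vs = L. \<Sum>ys\<in>C.
      if vs ! l = v \<and> ys ! l = y then joint vs ys else 0) / L"
  unfolding marg_VY_test_channel test_channel_def sum_distrib_left times_divide_eq_right
  by (simp add: sum_joint_nth)

lemma sum_joint: "(\<Sum>vs | length vs = L. \<Sum>ys\<in>C. joint vs ys) = 1"
  using sum_iid_prob[OF is_dist_pV, of L]
  by (simp add: joint_def E_sum sum_distrib_left[symmetric])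

section \<open>Distortion\<close>

lemma block_prob_nonneg: "block_prob PX W E xs vs ys \<ge> 0"
  using PX W E_nonneg unfolding block_prob_def is_dist_def is_channel_def
  by (intro mult_nonneg_nonneg prod_nonneg) auto

lemma sum_block_prob_source:
  assumes "length vs = L"
  shows "(\<Sum>xs | length xs = L. block_prob PX W E xs vs ys) = joint vs ys"
proof -
  have "(\<Sum>xs | length xs = L. block_prob PX W E xs vs ys)
      = (\<Sum>xs | length xs = L. \<Prod>k<L. PX (xs ! k) * W (xs ! k) (vs ! k)) * E vs ys"
    unfolding sum_distrib_right by (intro sum.cong) (auto simp: block_prob_def)
  also have "\<dots> = joint vs ys"
    using assms sum_lists_length_prod[of "\<lambda>k a. PX a * W a (vs ! k)"]
    by (simp add: joint_def iid_prob_def pV_def)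
  finally show ?thesis .
qed

lemma sum_block_prob_source_nth:
  assumes "l < L" and "length vs = L"
  shows "(\<Sum>xs | length xs = L. if xs ! l = x then block_prob PX W E xs vs ys else 0)
       = PX x * W x (vs ! l) * iid_prob_except pV l vs * E vs ys"
proof -
  define f where "f k a = PX a * W a (vs ! k)" for k a
  have "(if xs ! l = x then block_prob PX W E xs vs ys else 0)
      = f l x * E vs ys * (if xs ! l = x then \<Prod>k\<in>{..<L}-{l}. f k (xs ! k) else 0)"
    if "length xs = L" for xs
    using that assms(1) by (simp add: block_prob_def f_def prod.remove)
  then have "(\<Sum>xs | length xs = L. if xs ! l = x then block_prob PX W E xs vs ys else 0)
      = f l x * E vs ys * (\<Sum>xs | length xs = L. if xs ! l = x then \<Prod>k\<in>{..<L}-{l}. f k (xs ! k) else 0)"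
    unfolding sum_distrib_left by (intro sum.cong) auto
  also have "\<dots> = f l x * E vs ys * (\<Prod>k\<in>{..<L}-{l}. \<Sum>a\<in>UNIV. f k a)"
    using assms(1) by (simp add: sum_lists_length_nth_prod)
  also have "\<dots> = PX x * W x (vs ! l) * iid_prob_except pV l vs * E vs ys"
    using assms(2) by (simp add: f_def pV_def iid_prob_except_def)
  finally show ?thesis .
qed

lemma sum_block_prob:
  "(\<Sum>xs | length xs = L. \<Sum>vs | length vs = L. \<Sum>ys\<in>C. block_prob PX W E xs vs ys) = 1"
proof -
  have "(\<Sum>xs | length xs = L. \<Sum>vs | length vs = L. \<Sum>ys\<in>C. block_prob PX W E xs vs ys)
      = (\<Sum>vs | length vs = L. \<Sum>ys\<in>C. \<Sum>xs | length xs = L. block_prob PX W E xs vs ys)"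
    by (subst sum.swap) (simp add: sum.swap[of _ C])
  also have "\<dots> = 1"
    by (simp add: sum_block_prob_source sum_joint)
  finally show ?thesis .
qed

lemma sum_letter_channel_weighted:
  "(\<Sum>v\<in>UNIV. g v * letter_channel l v y)
     = (\<Sum>vs | length vs = L. \<Sum>ys\<in>C. if ys ! l = y then g (vs ! l) * iid_prob_except pV l vs * E vs ys else 0)"
proof -
  have "(\<Sum>v\<in>UNIV. g v * letter_channel l v y)
      = (\<Sum>v\<in>UNIV. \<Sum>vs | length vs = L. \<Sum>ys\<in>C.
          if vs ! l = v \<and> ys ! l = y then g v * iid_prob_except pV l vs * E vs ys else 0)"
    unfolding letter_channel_def sum_distrib_left
    by (simp add: if_distrib[where f = "\<lambda>z. _ * z"] mult.assoc cong: if_cong)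
  also have "\<dots> = (\<Sum>vs | length vs = L. \<Sum>ys\<in>C. \<Sum>v\<in>UNIV.
          if vs ! l = v \<and> ys ! l = y then g v * iid_prob_except pV l vs * E vs ys else 0)"
    by (subst sum.swap) (simp add: sum.swap[of _ UNIV])
  also have "\<dots> = (\<Sum>vs | length vs = L. \<Sum>ys\<in>C.
          if ys ! l = y then g (vs ! l) * iid_prob_except pV l vs * E vs ys else 0)"
    by (auto intro!: sum.cong)
  finally show ?thesis .
qed

lemma expected_emp_dist:
  "(\<Sum>xs | length xs = L. \<Sum>vs | length vs = L. \<Sum>ys\<in>C. block_prob PX W E xs vs ys * emp_dist xs ys (x, y))
     = marg_XY PX W test_channel (x, y)"
proof -
  define g where "g l vs ys = (if ys ! l = y then PX x * W x (vs ! l) * iid_prob_except pV l vs * E vs ys else 0)"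
    for l vs ys
  have letter: "(\<Sum>xs | length xs = L. if xs ! l = x \<and> ys ! l = y then block_prob PX W E xs vs ys else 0)
      = g l vs ys" if "length vs = L" and "l < L" for vs ys l
    using that by (cases "ys ! l = y") (simp_all add: g_def sum_block_prob_source_nth)
  have inner: "(\<Sum>xs | length xs = L. block_prob PX W E xs vs ys * emp_dist xs ys (x, y))
      = (\<Sum>l<L. g l vs ys) / L" if "length vs = L" for vs ys
  proof -
    have "(\<Sum>xs | length xs = L. block_prob PX W E xs vs ys * emp_dist xs ys (x, y))
        = (\<Sum>xs | length xs = L. \<Sum>l<L. if xs ! l = x \<and> ys ! l = y then block_prob PX W E xs vs ys else 0) / L"
      unfolding sum_divide_distrib
      by (intro sum.cong)
        (auto simp: emp_dist_eq_average sum_distrib_left sum_divide_distrib if_distrib[where f = "\<lambda>z. _ * z"] cong: if_cong)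
    also have "\<dots> = (\<Sum>l<L. g l vs ys) / L"
      using that by (subst sum.swap) (simp add: letter)
    finally show ?thesis .
  qed
  have "(\<Sum>xs | length xs = L. \<Sum>vs | length vs = L. \<Sum>ys\<in>C. block_prob PX W E xs vs ys * emp_dist xs ys (x, y))
      = (\<Sum>vs | length vs = L. \<Sum>ys\<in>C. \<Sum>xs | length xs = L. block_prob PX W E xs vs ys * emp_dist xs ys (x, y))"
    by (subst sum.swap) (simp add: sum.swap[of _ C])
  also have "\<dots> = (\<Sum>l<L. \<Sum>vs | length vs = L. \<Sum>ys\<in>C. g l vs ys) / L"
    by (simp add: inner sum_divide_distrib[symmetric]) (subst sum.swap, simp add: sum.swap[of _ C])
  also have "\<dots> = (\<Sum>l<L. \<Sum>v\<in>UNIV. PX x * W x v * letter_channel l v y) / L"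
    by (simp add: g_def sum_letter_channel_weighted)
  also have "\<dots> = marg_XY PX W test_channel (x, y)"
    by (simp add: marg_XY_def test_channel_def sum_divide_distrib sum_distrib_left) (subst sum.swap, simp)
  finally show ?thesis .
qed

lemma distortion_test_channel_le:
  fixes d :: "('x \<times> 'y \<Rightarrow> real) \<Rightarrow> real"
  assumes "convex_on_dists d"
  shows "d (marg_XY PX W test_channel)
    \<le> (\<Sum>xs | length xs = L. \<Sum>vs | length vs = L. \<Sum>ys\<in>C. block_prob PX W E xs vs ys * d (emp_dist xs ys))"
proof -
  define T :: "('x list \<times> 'v list \<times> 'y list) set"
    where "T = {xs. length xs = L} \<times> {vs. length vs = L} \<times> C"
  define w where "w = (\<lambda>(xs, vs, ys). block_prob PX W E xs vs ys)"
  define em :: "'x list \<times> 'v list \<times> 'y list \<Rightarrow> 'x \<times> 'y \<Rightarrow> real"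
    where "em = (\<lambda>(xs, vs, ys). emp_dist xs ys)"
  have nested: "(\<Sum>xs | length xs = L. \<Sum>vs | length vs = L. \<Sum>ys\<in>C. f xs vs ys)
      = (\<Sum>(xs, vs, ys)\<in>T. f xs vs ys)" for f :: "'x list \<Rightarrow> 'v list \<Rightarrow> 'y list \<Rightarrow> real"
    by (simp add: T_def sum.cartesian_product)
  have mixture: "marg_XY PX W test_channel = (\<lambda>p. \<Sum>t\<in>T. w t * em t p)"
  proof
    fix p :: "'x \<times> 'y"
    show "marg_XY PX W test_channel p = (\<Sum>t\<in>T. w t * em t p)"
      using expected_emp_dist[of "fst p" "snd p"] nested by (simp add: w_def em_def split_def)
  qed
  have "d (\<lambda>p. \<Sum>t\<in>T. w t * em t p) \<le> (\<Sum>t\<in>T. w t * d (em t))"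
  proof (rule convex_on_dists_sum[OF assms])
    show "finite T"
      using finite_C by (simp add: T_def finite_list_length)
    show "sum w T = 1"
      using sum_block_prob nested by (simp add: w_def split_def)
  qed (use L_pos block_prob_nonneg in \<open>auto simp: T_def w_def em_def intro!: is_dist_emp_dist\<close>)
  also have "\<dots> = (\<Sum>xs | length xs = L. \<Sum>vs | length vs = L. \<Sum>ys\<in>C. block_prob PX W E xs vs ys * d (emp_dist xs ys))"
    using nested by (simp add: w_def em_def split_def)
  finally show ?thesis
    by (simp only: mixture)
qed

section \<open>Rate\<close>

lemma sum_marg_VY_test_channel_weighted:
  "real L * (\<Sum>p\<in>UNIV. marg_VY PX W test_channel p * h p)
     = (\<Sum>vs | length vs = L. \<Sum>ys\<in>C. joint vs ys * (\<Sum>l<L. h (vs ! l, ys ! l)))"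
proof -
  have "real L * (\<Sum>p\<in>UNIV. marg_VY PX W test_channel p * h p)
      = (\<Sum>p\<in>UNIV. \<Sum>l<L. \<Sum>vs | length vs = L. \<Sum>ys\<in>C.
          if (vs ! l, ys ! l) = p then joint vs ys * h p else 0)"
    unfolding sum_distrib_left using L_pos
    by (intro sum.cong refl) (auto simp: marg_VY_test_channel_eq_average sum_distrib_right if_distrib[where f = "\<lambda>x. x * _"] cong: if_cong)
  also have "\<dots> = (\<Sum>vs | length vs = L. \<Sum>ys\<in>C. \<Sum>l<L. \<Sum>p\<in>UNIV.
          if (vs ! l, ys ! l) = p then joint vs ys * h p else 0)"
    by (simp only: sum.swap[of _ "{..<L}"], simp only: sum.swap[of _ UNIV])
  also have "\<dots> = (\<Sum>vs | length vs = L. \<Sum>ys\<in>C. joint vs ys * (\<Sum>l<L. h (vs ! l, ys ! l)))"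
    by (simp add: sum_distrib_left)
  finally show ?thesis .
qed

lemma marg_VY_test_channel_pos:
  assumes "length vs = L" and "ys \<in> C" and "joint vs ys > 0" and "l < L"
  shows "marg_VY PX W test_channel (vs ! l, ys ! l) > 0"
proof -
  define match where "match l' vs' ys' =
    (if vs' ! l' = vs ! l \<and> ys' ! l' = ys ! l then joint vs' ys' else 0)" for l' vs' ys'
  have match_nonneg: "match l' vs' ys' \<ge> 0" for l' vs' ys'
    by (simp add: match_def joint_nonneg)
  have "joint vs ys = match l vs ys"
    by (simp add: match_def)
  also have "\<dots> \<le> (\<Sum>ys'\<in>C. match l vs ys')"
    using assms(2) finite_C match_nonneg by (intro member_le_sum) auto
  also have "\<dots> \<le> (\<Sum>vs' | length vs' = L. \<Sum>ys'\<in>C. match l vs' ys')"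
    using assms(1) match_nonneg finite_list_length
    by (intro member_le_sum[where f = "\<lambda>vs'. \<Sum>ys'\<in>C. match l vs' ys'"] sum_nonneg) auto
  also have "\<dots> \<le> (\<Sum>l'<L. \<Sum>vs' | length vs' = L. \<Sum>ys'\<in>C. match l' vs' ys')"
    using assms(4) match_nonneg
    by (intro member_le_sum[where f = "\<lambda>l'. \<Sum>vs' | length vs' = L. \<Sum>ys'\<in>C. match l' vs' ys'"] sum_nonneg) auto
  finally show ?thesis
    using assms(3) L_pos by (simp add: marg_VY_test_channel_eq_average match_def)
qed

definition test_output :: "'y \<Rightarrow> real" where
  "test_output y = (\<Sum>v\<in>UNIV. marg_VY PX W test_channel (v, y))"

definition backward_prob :: "'v list \<Rightarrow> 'y list \<Rightarrow> real" where
  "backward_prob vs ys = (\<Prod>l<L. marg_VY PX W test_channel (vs ! l, ys ! l) / test_output (ys ! l))"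

lemma marg_VY_test_channel_nonneg: "marg_VY PX W test_channel p \<ge> 0"
  using is_channel_test_channel
  by (cases p) (simp add: marg_VY_test_channel pV_nonneg is_channel_def is_dist_def)

lemma backward_prob_nonneg: "backward_prob vs ys \<ge> 0"
  unfolding backward_prob_def test_output_def
  by (intro prod_nonneg divide_nonneg_nonneg sum_nonneg ballI marg_VY_test_channel_nonneg)

lemma sum_backward_prob_le_1: "(\<Sum>vs | length vs = L. backward_prob vs ys) \<le> 1"
proof -
  have "(\<Sum>vs | length vs = L. backward_prob vs ys)
      = (\<Prod>l<L. \<Sum>v\<in>UNIV. marg_VY PX W test_channel (v, ys ! l) / test_output (ys ! l))"
    unfolding backward_prob_def by (rule sum_lists_length_prod)
  also have "\<dots> = (\<Prod>l<L. test_output (ys ! l) / test_output (ys ! l))"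
    by (simp add: test_output_def sum_divide_distrib[symmetric])
  also have "\<dots> \<le> 1"
    by (intro prod_le_1) auto
  finally show ?thesis .
qed

lemma pV_test_output_pos:
  assumes "length vs = L" and "ys \<in> C" and "joint vs ys > 0" and "l < L"
  shows "pV (vs ! l) > 0" and "test_output (ys ! l) > 0"
proof -
  have q_pos: "marg_VY PX W test_channel (vs ! l, ys ! l) > 0"
    using assms by (rule marg_VY_test_channel_pos)
  then show "pV (vs ! l) > 0"
    using pV_nonneg[of "vs ! l"] by (auto simp: marg_VY_test_channel zero_less_mult_iff)
  show "test_output (ys ! l) > 0"
    using q_pos member_le_sum[of "vs ! l" UNIV "\<lambda>v. marg_VY PX W test_channel (v, ys ! l)"]
      marg_VY_test_channel_nonneg by (simp add: test_output_def)
qed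

lemma backward_prob_pos:
  assumes "length vs = L" and "ys \<in> C" and "joint vs ys > 0"
  shows "backward_prob vs ys > 0"
  unfolding backward_prob_def
  by (intro prod_pos ballI divide_pos_pos)
    (simp_all add: marg_VY_test_channel_pos[OF assms] pV_test_output_pos(2)[OF assms])

lemma sum_ln_letter_ratio_le:
  assumes "length vs = L" and "ys \<in> C" and "joint vs ys > 0"
  shows "(\<Sum>l<L. ln (marg_VY PX W test_channel (vs ! l, ys ! l) / (pV (vs ! l) * test_output (ys ! l))))
    \<le> ln (backward_prob vs ys / joint vs ys)"
proof -
  let ?q = "\<lambda>l. marg_VY PX W test_channel (vs ! l, ys ! l)"
  note pos = marg_VY_test_channel_pos[OF assms] pV_test_output_pos[OF assms]
  have "(\<Sum>l<L. ln (?q l / (pV (vs ! l) * test_output (ys ! l))))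
      = ln (\<Prod>l<L. ?q l / (pV (vs ! l) * test_output (ys ! l)))"
    by (subst ln_prod) (auto dest: pos)
  also have "(\<Prod>l<L. ?q l / (pV (vs ! l) * test_output (ys ! l))) = backward_prob vs ys / iid_prob pV vs"
    using assms(1) by (simp add: backward_prob_def iid_prob_def prod_dividef[symmetric] field_simps)
  also have "ln (backward_prob vs ys / iid_prob pV vs) \<le> ln (backward_prob vs ys / joint vs ys)"
  proof -
    have "backward_prob vs ys > 0"
      using assms by (rule backward_prob_pos)
    moreover have "joint vs ys \<le> iid_prob pV vs"
      using E_le_1[OF assms(1,2)] iid_prob_nonneg[of pV vs] pV_nonneg
      by (simp add: joint_def mult_left_le)
    ultimately show ?thesis
      using assms(3) by (simp add: frac_le)
  qed
  finally show ?thesis .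
qed

lemma mutual_info_test_channel_le_expectation:
  "real L * mutual_info (marg_VY PX W test_channel) * ln 2
    \<le> (\<Sum>vs | length vs = L. \<Sum>ys\<in>C. joint vs ys * ln (backward_prob vs ys / joint vs ys))"
proof -
  let ?q = "marg_VY PX W test_channel"
  define h where "h p = ln (?q p / (pV (fst p) * test_output (snd p)))" for p
  have pV_eq: "(\<Sum>y\<in>UNIV. ?q (v, y)) = pV v" for v
    using is_channel_test_channel
    by (simp add: marg_VY_test_channel sum_distrib_left[symmetric] is_channel_def is_dist_def)
  have "real L * mutual_info ?q * ln 2 = real L * (\<Sum>p\<in>UNIV. ?q p * h p)"
    by (simp add: mutual_info_eq_sum_ln pV_eq test_output_def h_def)
  also have "\<dots> = (\<Sum>vs | length vs = L. \<Sum>ys\<in>C. joint vs ys * (\<Sum>l<L. h (vs ! l, ys ! l)))"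
    by (rule sum_marg_VY_test_channel_weighted)
  also have "\<dots> \<le> (\<Sum>vs | length vs = L. \<Sum>ys\<in>C. joint vs ys * ln (backward_prob vs ys / joint vs ys))"
  proof (intro sum_mono)
    fix vs :: "'v list" and ys :: "'y list"
    assume "vs \<in> {vs. length vs = L}" and "ys \<in> C"
    then show "joint vs ys * (\<Sum>l<L. h (vs ! l, ys ! l)) \<le> joint vs ys * ln (backward_prob vs ys / joint vs ys)"
      using sum_ln_letter_ratio_le joint_nonneg[of vs ys]
      by (cases "joint vs ys = 0") (auto simp: h_def intro: mult_left_mono)
  qed
  finally show ?thesis .
qed

lemma mutual_info_test_channel_le:
  "real L * mutual_info (marg_VY PX W test_channel) * ln 2 \<le> ln (card C)"
proof -
  define VC :: "('v list \<times> 'y list) set" where "VC = {vs. length vs = L} \<times> C"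
  define a where "a = (\<lambda>(vs, ys). joint vs ys)"
  define b where "b = (\<lambda>(vs, ys). backward_prob vs ys)"
  have "(\<Sum>vs | length vs = L. \<Sum>ys\<in>C. joint vs ys * ln (backward_prob vs ys / joint vs ys))
      = (\<Sum>z\<in>VC. a z * ln (b z / a z))"
    by (simp add: VC_def a_def b_def sum.cartesian_product split_def)
  also have "\<dots> \<le> ln (card C)"
  proof (rule gibbs_inequality)
    show "finite VC"
      using finite_C by (simp add: VC_def finite_list_length)
    show "sum a VC = 1"
      using sum_joint by (simp add: VC_def a_def sum.cartesian_product split_def)
    have "sum b VC = (\<Sum>ys\<in>C. \<Sum>vs | length vs = L. backward_prob vs ys)"
      unfolding VC_def b_def by (subst sum.swap) (simp add: sum.cartesian_product)
    also have "\<dots> \<le> (\<Sum>ys\<in>C. 1)"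
      by (intro sum_mono sum_backward_prob_le_1)
    finally show "sum b VC \<le> real (card C)"
      by simp
  qed (use backward_prob_pos backward_prob_nonneg joint_nonneg in \<open>auto simp: VC_def a_def b_def\<close>)
  finally show ?thesis
    using mutual_info_test_channel_le_expectation by linarith
qed

end

theorem lemma3p1:
  fixes PX :: "'x::finite \<Rightarrow> real"
    and W :: "'x \<Rightarrow> 'v::finite \<Rightarrow> real"
    and d :: "('x \<times> 'y::finite \<Rightarrow> real) \<Rightarrow> real"
    and L :: nat and R :: real and \<Delta> :: real
    and C :: "'y list set"
    and E :: "'v list \<Rightarrow> 'y list \<Rightarrow> real"
  assumes PX: "is_dist PX"
    and W: "is_channel W"
    and d_nonneg: "\<And>P. is_dist P \<Longrightarrow> d P \<ge> 0"
    and d_convex: "\<And>(J::nat set) w Q. finite J \<Longrightarrow> (\<forall>j\<in>J. w j \<ge> 0) \<Longrightarrow> (\<Sum>j\<in>J. w j) = 1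
        \<Longrightarrow> (\<forall>j\<in>J. is_dist (Q j))
        \<Longrightarrow> (\<Sum>j\<in>J. w j * d (Q j)) \<ge> d (\<lambda>p. \<Sum>j\<in>J. w j * Q j p)"
    and L: "L > 0"
    and C: "C \<subseteq> {ys. length ys = L}"
    and rate: "real (card C) = 2 powr (real L * R)"
    and E_nonneg: "\<And>vs ys. E vs ys \<ge> 0"
    and E_supp: "\<And>vs ys. ys \<notin> C \<Longrightarrow> E vs ys = 0"
    and E_sum: "\<And>vs. length vs = L \<Longrightarrow> (\<Sum>ys\<in>C. E vs ys) = 1"
    and distortion: "(\<Sum>xs\<in>{xs. length xs = L}. \<Sum>vs\<in>{vs. length vs = L}. \<Sum>ys\<in>C.
                        block_prob PX W E xs vs ys * d (emp_dist xs ys)) = \<Delta>"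
  shows "\<exists>Q :: 'v \<Rightarrow> 'y \<Rightarrow> real. is_channel Q \<and> d (marg_XY PX W Q) \<le> \<Delta>
            \<and> mutual_info (marg_VY PX W Q) \<le> R"
proof -
  interpret remote_source_code PX W L C E
    using PX W L C E_nonneg E_sum by unfold_locales
  have convex: "convex_on_dists d"
    using d_convex by (simp add: convex_on_dists_def)
  have "d (marg_XY PX W test_channel) \<le> \<Delta>"
    using distortion_test_channel_le[OF convex] distortion by simp
  moreover have "mutual_info (marg_VY PX W test_channel) \<le> R"
  proof -
    have "real L * mutual_info (marg_VY PX W test_channel) * ln 2 \<le> real L * R * ln 2"
      using mutual_info_test_channel_le rate L by (simp add: ln_powr)
    then show ?thesis
      using L by simp
  qed
  ultimately show ?thesis
    using is_channel_test_channel by blast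
qed

end
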